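(* Let $p\in(1,\infty)$. Every Banach space with property HC$_p$ has the alternating $p$-Banach-Saks property.
   Context: $[\mathbb M]^k$ ($\mathbb M\subseteq\mathbb N$ infinite) is the set of $\bar n=(n_1<\dots<n_k)$ in $\mathbb M$ with Hamming distance $d_{\mathbb H}(\bar n,\bar m)=|\{j:n_j\ne m_j\}|$; $[\mathbb N]^\omega$ is the set of infinite subsets of $\mathbb N$. A metric space $(M,d)$ has property HC$_p$ if there is $\lambda>0$ such that for every $k$ and every Lipschitz $f:([\mathbb N]^k,d_{\mathbb H})\to M$ there are $\bar n,\bar m\in[\mathbb N]^k$ with $\bar n\cap\bar m=\varnothing$ (as sets) and $d(f(\bar n),f(\bar m))\le\lambda k^{1/p}\mathrm{Lip}(f)$. A Banach space $X$ has the alternating $p$-Banach-Saks property if there is $C>0$ such that for every sequence $(x_n)$ in $B_X$ and every $k\in\mathbb N$ there is $\mathbb M\in[\mathbb N]^\omega$ with $\|\sum_{j=1}^k(-1)^jx_{n_j}\|\le Ck^{1/p}$ for all $(n_1,\dots,n_k)\in[\mathbb M]^k$. *)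

theory Defs
  imports "HOL-Analysis.Analysis"
begin

definition incr_tuples :: "nat \<Rightarrow> nat set \<Rightarrow> nat list set" where
  "incr_tuples k M = {ns. length ns = k \<and> sorted_wrt (<) ns \<and> set ns \<subseteq> M}"

definition hamming :: "nat list \<Rightarrow> nat list \<Rightarrow> nat" where
  "hamming ns ms = card {j. j < length ns \<and> ns ! j \<noteq> ms ! j}"

definition hamming_lipschitz :: "nat \<Rightarrow> (nat list \<Rightarrow> 'a::metric_space) \<Rightarrow> bool" where
  "hamming_lipschitz k f \<longleftrightarrow> (\<exists>L. \<forall>ns\<in>incr_tuples k UNIV. \<forall>ms\<in>incr_tuples k UNIV.
      dist (f ns) (f ms) \<le> L * real (hamming ns ms))"

definition hamming_lip :: "nat \<Rightarrow> (nat list \<Rightarrow> 'a::metric_space) \<Rightarrow> real" where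
  "hamming_lip k f = (SUP (ns, ms) \<in> {(ns, ms). ns \<in> incr_tuples k UNIV \<and> ms \<in> incr_tuples k UNIV \<and> ns \<noteq> ms}.
      dist (f ns) (f ms) / real (hamming ns ms))"

definition HC :: "real \<Rightarrow> 'a::metric_space set \<Rightarrow> bool" where
  "HC p M \<longleftrightarrow> (\<exists>lam>0. \<forall>k. \<forall>f. (\<forall>ns\<in>incr_tuples k UNIV. f ns \<in> M) \<and> hamming_lipschitz k f \<longrightarrow>
      (\<exists>ns\<in>incr_tuples k UNIV. \<exists>ms\<in>incr_tuples k UNIV. set ns \<inter> set ms = {} \<and>
         dist (f ns) (f ms) \<le> lam * real k powr (1 / p) * hamming_lip k f))"

definition alternating_BS :: "real \<Rightarrow> 'a::real_normed_vector itself \<Rightarrow> bool" where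
  "alternating_BS p _ \<longleftrightarrow> (\<exists>C>0. \<forall>x :: nat \<Rightarrow> 'a. (\<forall>n. norm (x n) \<le> 1) \<longrightarrow>
      (\<forall>k. \<exists>M. infinite M \<and> (\<forall>ns\<in>incr_tuples k M.
         norm (\<Sum>j<k. (-1) ^ (j + 1) *\<^sub>R x (ns ! j)) \<le> C * real k powr (1 / p))))"

end

theory Submission
  imports Defs "HOL-Library.Ramsey"
begin

text \<open>
  Fix x in the unit ball, let \<lambda> be the HC constant and \<epsilon> = 2\<lambda>r powr (1/p). By Ramsey's theorem
  there is an infinite Y such that for every sign pattern s of length 2r the s-signed sums
  \<Sum> \<plusminus>x(n_i) along increasing 2r-tuples of Y are either all \<le> \<epsilon> or all > \<epsilon>. Property HC,
  applied to the 2-Lipschitz map (n_1, ..., n_r) \<mapsto> \<Sum> x(n_j) on indices into Y, gives two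
  disjoint r-tuples whose sums differ by at most \<epsilon>; their union is a tuple of Y with some
  pattern s with r plus signs whose signed sum is \<le> \<epsilon>, so every s-signed sum along Y is \<le> \<epsilon>.
  An alternating sum along a sufficiently spread-out tuple of Y is the difference of two
  s-signed sums which agree at the minus signs, hence it is at most 2\<epsilon>.
\<close>

section \<open>Increasing tuples\<close>

lemma incr_tuplesD:
  assumes "ns \<in> incr_tuples k M"
  shows "distinct ns" "length ns = k" "card (set ns) = k" "set ns \<subseteq> M"
    and "sorted_list_of_set (set ns) = ns"
proof -
  have s: "sorted_wrt (<) ns" "length ns = k" "set ns \<subseteq> M" using assms by (auto simp: incr_tuples_def)
  show d: "distinct ns" using s(1) by (simp add: strict_sorted_iff)
  show "card (set ns) = k" using d s(2) by (simp add: distinct_card)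
  show "sorted_list_of_set (set ns) = ns"
    using s(1) by (simp add: sorted_list_of_set.idem_if_sorted_distinct strict_sorted_iff)
  show "length ns = k" "set ns \<subseteq> M" using s by auto
qed

lemma sorted_list_of_set_in_incr_tuples:
  "X \<subseteq> M \<Longrightarrow> finite X \<Longrightarrow> card X = k \<Longrightarrow> sorted_list_of_set X \<in> incr_tuples k M"
  by (simp add: incr_tuples_def)

lemma map_in_incr_tuples:
  assumes "strict_mono e" "range e \<subseteq> Y" "ns \<in> incr_tuples k UNIV"
  shows "map e ns \<in> incr_tuples k Y"
proof -
  have "sorted_wrt (<) ns" "length ns = k" using assms(3) by (auto simp: incr_tuples_def)
  then have "sorted_wrt (\<lambda>x y. e x < e y) ns"
    by (auto intro: sorted_wrt_mono_rel[rotated] simp: strict_mono_less[OF assms(1)])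
  then show ?thesis using \<open>length ns = k\<close> assms(2) by (auto simp: incr_tuples_def sorted_wrt_map)
qed

lemma map_upt_in_incr_tuples: "strict_mono_on {..<k} u \<Longrightarrow> map u [0..<k] \<in> incr_tuples k UNIV"
  by (auto simp: incr_tuples_def sorted_wrt_iff_nth_less strict_mono_on_def)

lemma incr_tuples_extend:
  assumes "infinite M" "c \<in> incr_tuples K M"
  shows "\<exists>c'\<in>incr_tuples (K + j) M. take K c' = c"
proof (induction j)
  case 0
  show ?case by (metis assms(2) incr_tuplesD(2) add_0_right order_refl take_all)
next
  case (Suc j)
  then obtain c' where c': "c' \<in> incr_tuples (K + j) M" "take K c' = c" by blast
  obtain y where y: "y \<in> M" "y > Max (insert 0 (set c'))"
    using assms(1) by (metis infinite_nat_iff_unbounded)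
  then have "\<forall>z\<in>set c'. z < y" by (meson List.finite_set Max_ge finite_insert insertCI le_less_trans)
  then have "c' @ [y] \<in> incr_tuples (K + Suc j) M"
    using c'(1) y(1) by (auto simp: incr_tuples_def sorted_wrt_append)
  moreover have "take K (c' @ [y]) = c" using c' incr_tuplesD(2)[OF c'(1)] by simp
  ultimately show ?case by blast
qed

lemma incr_tuples_range_strict_mono:
  fixes \<phi> :: "nat \<Rightarrow> nat"
  assumes "strict_mono \<phi>" "c \<in> incr_tuples n (range \<phi>)"
  obtains kk where "strict_mono kk" "\<And>l. l < n \<Longrightarrow> c!l = \<phi> (kk l)"
proof -
  define k0 where "k0 l = inv \<phi> (c!l)" for l
  have c: "c!l = \<phi> (k0 l)" if "l < n" for l
  proof -
    have "c!l \<in> range \<phi>" using incr_tuplesD(2,4)[OF assms(2)] that by (metis nth_mem subsetD)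
    then show ?thesis by (simp add: k0_def f_inv_into_f)
  qed
  have k0_less: "k0 l < k0 l'" if "l < l'" "l' < n" for l l'
  proof -
    have "c!l < c!l'" using assms(2) that by (auto simp: incr_tuples_def sorted_wrt_iff_nth_less)
    then have "\<phi> (k0 l) < \<phi> (k0 l')" using c that by simp
    then show ?thesis using strict_mono_less[OF assms(1)] by simp
  qed
  define kk where "kk l = (if l < n then k0 l else Max (k0 ` {..<n}) + 1 + l)" for l
  have "strict_mono kk"
  proof (rule strict_monoI)
    fix l l' :: nat assume "l < l'"
    show "kk l < kk l'"
    proof (cases "l' < n")
      case True
      then show ?thesis using k0_less[OF \<open>l < l'\<close>] \<open>l < l'\<close> by (simp add: kk_def)
    next
      case False
      show ?thesis
      proof (cases "l < n")
        case True
        then have "k0 l \<le> Max (k0 ` {..<n})" by simp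
        moreover have "kk l = k0 l" "kk l' = Max (k0 ` {..<n}) + 1 + l'"
          using True False by (simp_all add: kk_def)
        ultimately show ?thesis by linarith
      qed (use False \<open>l < l'\<close> in \<open>simp add: kk_def\<close>)
    qed
  qed
  moreover have "c!l = \<phi> (kk l)" if "l < n" for l using c that by (simp add: kk_def)
  ultimately show ?thesis using that by blast
qed

lemma sum_nth_distinct:
  fixes h :: "nat \<Rightarrow> 'a::comm_monoid_add"
  assumes "distinct xs"
  shows "(\<Sum>i<length xs. h (xs!i)) = (\<Sum>c\<in>set xs. h c)"
  using sum.reindex_bij_betw[OF bij_betw_nth[OF assms refl refl], of h] by (simp add: lessThan_atLeast0)

section \<open>Ramsey's theorem for increasing tuples\<close>

definition homogeneous :: "nat \<Rightarrow> nat set \<Rightarrow> (nat list \<Rightarrow> bool) \<Rightarrow> bool" where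
  "homogeneous k Y Q \<longleftrightarrow> (\<forall>cs\<in>incr_tuples k Y. Q cs) \<or> (\<forall>cs\<in>incr_tuples k Y. \<not> Q cs)"

lemma homogeneous_subset: "homogeneous k Y Q \<Longrightarrow> Y' \<subseteq> Y \<Longrightarrow> homogeneous k Y' Q"
  unfolding homogeneous_def incr_tuples_def by blast

lemma Ramsey_incr_tuples:
  fixes Q :: "nat list \<Rightarrow> bool"
  assumes "infinite Z"
  obtains Y where "Y \<subseteq> Z" "infinite Y" "homogeneous n Y Q"
proof -
  have "\<forall>X. X \<subseteq> Z \<and> finite X \<and> card X = n \<longrightarrow> of_bool (Q (sorted_list_of_set X)) < (2::nat)" by simp
  from Ramsey[OF assms this] obtain Y and t :: nat where Y: "Y \<subseteq> Z" "infinite Y" "t < 2"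
    and hom: "\<forall>X. X \<subseteq> Y \<and> finite X \<and> card X = n \<longrightarrow> of_bool (Q (sorted_list_of_set X)) = t"
    by blast
  have colour: "of_bool (Q cs) = t" if "cs \<in> incr_tuples n Y" for cs
  proof -
    have "of_bool (Q (sorted_list_of_set (set cs))) = t" using hom incr_tuplesD(3,4)[OF that] by simp
    then show ?thesis by (simp add: incr_tuplesD(5)[OF that])
  qed
  have "homogeneous n Y Q"
    unfolding homogeneous_def
  proof (cases "t = 0")
    case False
    then have "t = 1" using Y(3) by simp
    then show "(\<forall>cs\<in>incr_tuples n Y. Q cs) \<or> (\<forall>cs\<in>incr_tuples n Y. \<not> Q cs)"
      using colour by (metis of_bool_eq_1_iff)
  qed (use colour in auto)
  then show ?thesis using that Y(1,2) by blast
qed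

lemma Ramsey_incr_tuples_finite_family:
  fixes Q :: "'b \<Rightarrow> nat list \<Rightarrow> bool"
  assumes "finite F" "infinite Z"
  obtains Y where "Y \<subseteq> Z" "infinite Y" "\<forall>q\<in>F. homogeneous n Y (Q q)"
proof -
  have "\<exists>Y\<subseteq>Z. infinite Y \<and> (\<forall>q\<in>F. homogeneous n Y (Q q))"
    using assms(1)
  proof (induction F rule: finite_induct)
    case (insert q F)
    then obtain Y where Y: "Y \<subseteq> Z" "infinite Y" "\<forall>q\<in>F. homogeneous n Y (Q q)" by blast
    obtain Y' where Y': "Y' \<subseteq> Y" "infinite Y'" "homogeneous n Y' (Q q)"
      using Ramsey_incr_tuples[OF Y(2)] .
    have "\<forall>q'\<in>insert q F. homogeneous n Y' (Q q')"
      using Y(3) Y'(1,3) homogeneous_subset by blast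
    then show ?case using Y(1) Y'(1,2) by blast
  qed (use assms(2) in blast)
  then show ?thesis using that by blast
qed

section \<open>Sign patterns\<close>

definition true_rank :: "bool list \<Rightarrow> nat \<Rightarrow> nat" where
  "true_rank s i = length (filter id (take i s))"

lemma true_rank_add: "i \<le> j \<Longrightarrow> true_rank s j = true_rank s i + length (filter id (take (j - i) (drop i s)))"
  unfolding true_rank_def by (metis add_diff_inverse_nat filter_append length_append not_le take_add)

lemma true_rank_mono: "i \<le> j \<Longrightarrow> true_rank s i \<le> true_rank s j"
  using true_rank_add by simp

lemma true_rank_less:
  assumes "i < j" "i < length s" "s!i"
  shows "true_rank s i < true_rank s j"
proof -
  have "drop i s = s!i # drop (Suc i) s" using assms(2) by (simp add: Cons_nth_drop_Suc)
  then have "take (j - i) (drop i s) = s!i # take (j - i - 1) (drop (Suc i) s)"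
    using assms(1) by (cases "j - i") auto
  then show ?thesis using true_rank_add[of i j s] assms by simp
qed

lemma sum_true_positions:
  fixes F :: "nat \<Rightarrow> 'a::comm_monoid_add"
  shows "(\<Sum>i<length s. if s!i then F (true_rank s i) else 0) = (\<Sum>j<length (filter id s). F j)"
proof (induction s rule: rev_induct)
  case (snoc b s)
  have "(\<Sum>i<length s. if (s @ [b])!i then F (true_rank (s @ [b]) i) else 0)
      = (\<Sum>i<length s. if s!i then F (true_rank s i) else 0)"
    by (rule sum.cong) (auto simp: nth_append true_rank_def)
  then show ?case using snoc by (simp add: true_rank_def id_def)
qed simp

lemma sum_pairs_eq_alternating_sum:
  fixes f :: "nat \<Rightarrow> 'a::real_normed_vector"
  shows "(\<Sum>j<r. f (2*j) - f (2*j+1)) = (\<Sum>l<2*r. (-1)^l *\<^sub>R f l)"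
  by (induction r) (simp_all add: algebra_simps)

definition signed_sum :: "bool list \<Rightarrow> (nat \<Rightarrow> 'a::real_normed_vector) \<Rightarrow> (nat \<Rightarrow> nat) \<Rightarrow> 'a" where
  "signed_sum s y u = (\<Sum>i<length s. (if s!i then 1 else -1) *\<^sub>R y (u i))"

text \<open>
  For \<delta> = 0 and \<delta> = 1 this gives two increasing tuples with sign pattern s that take the
  values a(2t) and a(2t + 1) at the t-th plus sign and agree at the minus signs, which are placed
  in the gap just below a(2t).
\<close>

lemma strict_mono_on_pattern_interleaving:
  fixes s :: "bool list" and a :: "nat \<Rightarrow> nat"
  assumes gap: "\<And>l l'. l < l' \<Longrightarrow> a l + length s < a l'" and a0: "length s \<le> a 0" and "\<delta> \<le> 1"
  shows "strict_mono_on {..<length s}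
    (\<lambda>i. if s!i then a (2 * true_rank s i + \<delta>) else a (2 * true_rank s i) - (length s - i))"
proof (rule strict_mono_onI)
  fix i j assume "i \<in> {..<length s}" "j \<in> {..<length s}" "i < j"
  then have ij: "i < j" "j < length s" by auto
  have a_mono: "a l \<le> a l'" if "l \<le> l'" for l l'
    using gap[of l l'] that by (cases "l = l'") auto
  have a_big: "length s \<le> a l" for l using a_mono[of 0 l] a0 by simp
  have tr: "true_rank s i \<le> true_rank s j" using true_rank_mono ij by simp
  show "(if s!i then a (2 * true_rank s i + \<delta>) else a (2 * true_rank s i) - (length s - i))
      < (if s!j then a (2 * true_rank s j + \<delta>) else a (2 * true_rank s j) - (length s - j))"
  proof (cases "s!i")
    case True
    then have "true_rank s i < true_rank s j" using true_rank_less ij by simp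
    then have "2 * true_rank s i + \<delta> < 2 * true_rank s j" using \<open>\<delta> \<le> 1\<close> by simp
    then have "a (2 * true_rank s i + \<delta>) + length s < a (2 * true_rank s j)" by (rule gap)
    moreover have "a (2 * true_rank s j) \<le> a (2 * true_rank s j + \<delta>)" by (rule a_mono) simp
    ultimately show ?thesis using True by auto
  next
    case False
    have "a (2 * true_rank s i) \<le> a (2 * true_rank s j)" using tr by (intro a_mono) simp
    moreover have "a (2 * true_rank s j) \<le> a (2 * true_rank s j + \<delta>)" by (rule a_mono) simp
    ultimately show ?thesis using False ij a_big[of "2 * true_rank s i"] a_big[of "2 * true_rank s j"]
      by auto
  qed
qed

lemma alternating_sum_le_from_pattern:
  fixes y :: "nat \<Rightarrow> 'a::real_normed_vector"
  assumes hom: "\<And>u. strict_mono_on {..<length s} u \<Longrightarrow> norm (signed_sum s y u) \<le> \<epsilon>"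
    and gap: "\<And>l l'. l < l' \<Longrightarrow> a l + length s < a l'" and a0: "length s \<le> a 0"
  shows "norm (\<Sum>l<2 * length (filter id s). (-1)^l *\<^sub>R y (a l)) \<le> 2 * \<epsilon>"
proof -
  define u where "u \<delta> i = (if s!i then a (2 * true_rank s i + \<delta>) else a (2 * true_rank s i) - (length s - i))"
    for \<delta> i
  have "signed_sum s y (u 0) - signed_sum s y (u 1)
      = (\<Sum>i<length s. if s!i then y (a (2 * true_rank s i)) - y (a (2 * true_rank s i + 1)) else 0)"
    unfolding signed_sum_def u_def sum_subtractf[symmetric] by (intro sum.cong) auto
  also have "\<dots> = (\<Sum>l<2 * length (filter id s). (-1)^l *\<^sub>R y (a l))"
    using sum_true_positions[of s "\<lambda>j. y (a (2*j)) - y (a (2*j+1))"]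
      sum_pairs_eq_alternating_sum[of "y \<circ> a"] by simp
  finally have "norm (\<Sum>l<2 * length (filter id s). (-1)^l *\<^sub>R y (a l))
      \<le> norm (signed_sum s y (u 0)) + norm (signed_sum s y (u 1))"
    by (metis norm_triangle_ineq4)
  also have "\<dots> \<le> 2 * \<epsilon>"
  proof -
    have "norm (signed_sum s y (u \<delta>)) \<le> \<epsilon>" if "\<delta> \<le> 1" for \<delta>
      using hom strict_mono_on_pattern_interleaving[of a s, OF gap a0 that] unfolding u_def by blast
    from this[of 0] this[of 1] show ?thesis by simp
  qed
  finally show ?thesis .
qed

lemma signed_sum_membership_pattern:
  fixes y :: "nat \<Rightarrow> 'a::real_normed_vector"
  assumes "finite A" "finite B" "A \<inter> B = {}"
  defines "cs \<equiv> sorted_list_of_set (A \<union> B)"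
  shows "signed_sum (map (\<lambda>c. c \<in> A) cs) y ((!) cs) = (\<Sum>c\<in>A. y c) - (\<Sum>c\<in>B. y c)"
    and "length (filter id (map (\<lambda>c. c \<in> A) cs)) = card A"
proof -
  have cs: "distinct cs" "set cs = A \<union> B" unfolding cs_def using assms(1,2) by auto
  have "signed_sum (map (\<lambda>c. c \<in> A) cs) y ((!) cs)
      = (\<Sum>i<length cs. (\<lambda>c. (if c \<in> A then 1 else -1) *\<^sub>R y c) (cs!i))"
    unfolding signed_sum_def by simp
  also have "\<dots> = (\<Sum>c\<in>A \<union> B. (if c \<in> A then 1 else -1) *\<^sub>R y c)"
    using sum_nth_distinct[OF cs(1)] cs(2) by simp
  also have "\<dots> = (\<Sum>c\<in>A. y c) + (\<Sum>c\<in>B. - y c)"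
  proof -
    have "(\<Sum>c\<in>B. (if c \<in> A then 1 else -1) *\<^sub>R y c) = (\<Sum>c\<in>B. - y c)"
      using assms(3) by (intro sum.cong) auto
    then show ?thesis using assms(1-3) by (simp add: sum.union_disjoint)
  qed
  finally show "signed_sum (map (\<lambda>c. c \<in> A) cs) y ((!) cs) = (\<Sum>c\<in>A. y c) - (\<Sum>c\<in>B. y c)"
    by (simp add: sum_negf)
  have "length (filter id (map (\<lambda>c. c \<in> A) cs)) = length (filter (\<lambda>c. c \<in> A) cs)"
    by (simp add: filter_map comp_def)
  also have "\<dots> = card (set (filter (\<lambda>c. c \<in> A) cs))"
    using cs(1) by (metis distinct_card distinct_filter)
  also have "set (filter (\<lambda>c. c \<in> A) cs) = A" using cs(2) by auto
  finally show "length (filter id (map (\<lambda>c. c \<in> A) cs)) = card A" .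
qed

section \<open>From property HC to alternating sums\<close>

definition HC_with_constant :: "real \<Rightarrow> real \<Rightarrow> 'a::metric_space set \<Rightarrow> bool" where
  "HC_with_constant p lam M \<longleftrightarrow> (\<forall>k f. (\<forall>ns\<in>incr_tuples k UNIV. f ns \<in> M) \<and> hamming_lipschitz k f \<longrightarrow>
      (\<exists>ns\<in>incr_tuples k UNIV. \<exists>ms\<in>incr_tuples k UNIV. set ns \<inter> set ms = {} \<and>
         dist (f ns) (f ms) \<le> lam * real k powr (1 / p) * hamming_lip k f))"

lemma HC_iff_HC_with_constant: "HC p M \<longleftrightarrow> (\<exists>lam>0. HC_with_constant p lam M)"
  unfolding HC_def HC_with_constant_def by blast

lemma dist_sum_nth_le_hamming:
  fixes y :: "nat \<Rightarrow> 'a::real_normed_vector"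
  assumes y: "\<And>n. norm (y n) \<le> 1" and "length ns = r" "length ms = r"
  shows "dist (\<Sum>j<r. y (ns!j)) (\<Sum>j<r. y (ms!j)) \<le> 2 * real (hamming ns ms)"
proof -
  have "dist (\<Sum>j<r. y (ns!j)) (\<Sum>j<r. y (ms!j)) \<le> (\<Sum>j<r. norm (y (ns!j) - y (ms!j)))"
    unfolding dist_norm sum_subtractf[symmetric] by (rule norm_sum)
  also have "\<dots> \<le> (\<Sum>j<r. if ns!j \<noteq> ms!j then 2 else 0)"
  proof (rule sum_mono)
    fix j
    have "norm (y (ns!j) - y (ms!j)) \<le> norm (y (ns!j)) + norm (y (ms!j))"
      by (rule norm_triangle_ineq4)
    also have "\<dots> \<le> 2" using y[of "ns!j"] y[of "ms!j"] by simp
    finally show "norm (y (ns!j) - y (ms!j)) \<le> (if ns!j \<noteq> ms!j then 2 else 0)" by simp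
  qed
  also have "\<dots> = 2 * real (card {j. j < r \<and> ns!j \<noteq> ms!j})"
    by (simp add: sum.If_cases Int_def)
  finally show ?thesis using assms(2) by (simp add: hamming_def)
qed

lemma hamming_lip_sum_nth:
  fixes y :: "nat \<Rightarrow> 'a::real_normed_vector"
  assumes y: "\<And>n. norm (y n) \<le> 1" and r: "1 \<le> r"
  shows "hamming_lipschitz r (\<lambda>ns. \<Sum>j<r. y (ns!j))"
    and "hamming_lip r (\<lambda>ns. \<Sum>j<r. y (ns!j)) \<le> 2"
proof -
  show "hamming_lipschitz r (\<lambda>ns. \<Sum>j<r. y (ns!j))"
    unfolding hamming_lipschitz_def
  proof (intro exI[of _ 2] ballI)
    fix ns ms assume "ns \<in> incr_tuples r UNIV" "ms \<in> incr_tuples r UNIV"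
    then show "dist (\<Sum>j<r. y (ns!j)) (\<Sum>j<r. y (ms!j)) \<le> 2 * real (hamming ns ms)"
      using dist_sum_nth_le_hamming[of y ns r ms, OF y] incr_tuplesD(2) by blast
  qed
  define S where "S = {(ns, ms). ns \<in> incr_tuples r UNIV \<and> ms \<in> incr_tuples r UNIV \<and> ns \<noteq> ms}"
  have "[0..<r] ! 0 \<noteq> [1..<r+1] ! 0" using r by (simp add: nth_upt del: upt_Suc)
  then have "[0..<r] \<noteq> [1..<r+1]" by metis
  then have "([0..<r], [1..<r+1]) \<in> S"
    unfolding S_def incr_tuples_def by (simp add: sorted_wrt_upt del: upt_Suc)
  then have "S \<noteq> {}" by blast
  moreover have "dist (\<Sum>j<r. y (ns!j)) (\<Sum>j<r. y (ms!j)) / real (hamming ns ms) \<le> 2"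
    if "(ns, ms) \<in> S" for ns ms
  proof -
    have len: "length ns = r" "length ms = r" and "ns \<noteq> ms"
      using that by (auto simp: S_def incr_tuples_def)
    then have "\<exists>j<length ns. ns!j \<noteq> ms!j" using nth_equalityI by metis
    then have "{j. j < length ns \<and> ns!j \<noteq> ms!j} \<noteq> {}" by blast
    then have "0 < hamming ns ms" unfolding hamming_def by (simp add: card_gt_0_iff)
    then show ?thesis using dist_sum_nth_le_hamming[of y, OF y len] by (simp add: divide_le_eq)
  qed
  ultimately show "hamming_lip r (\<lambda>ns. \<Sum>j<r. y (ns!j)) \<le> 2"
    unfolding hamming_lip_def S_def[symmetric] by (intro cSUP_least) auto
qed

lemma HC_with_constant_small_signed_sum:
  fixes y :: "nat \<Rightarrow> 'a::real_normed_vector"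
  assumes hc: "HC_with_constant p lam (UNIV :: 'a set)" and lam: "0 \<le> lam"
    and y: "\<And>n. norm (y n) \<le> 1" and r: "1 \<le> r"
  obtains s cs where "length s = 2 * r" "length (filter id s) = r" "cs \<in> incr_tuples (2 * r) UNIV"
    "norm (signed_sum s y ((!) cs)) \<le> 2 * lam * real r powr (1 / p)"
proof -
  define g where "g = (\<lambda>ns. \<Sum>j<r. y (ns!j))"
  have "hamming_lipschitz r g" unfolding g_def by (rule hamming_lip_sum_nth(1)[OF y r])
  then obtain ns ms where ns: "ns \<in> incr_tuples r UNIV" and ms: "ms \<in> incr_tuples r UNIV"
    and disj: "set ns \<inter> set ms = {}"
    and close: "dist (g ns) (g ms) \<le> lam * real r powr (1 / p) * hamming_lip r g"
    using hc unfolding HC_with_constant_def by blast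
  have "hamming_lip r g \<le> 2" unfolding g_def by (rule hamming_lip_sum_nth(2)[OF y r])
  then have "lam * real r powr (1 / p) * hamming_lip r g \<le> lam * real r powr (1 / p) * 2"
    using lam by (intro mult_left_mono) auto
  then have small: "norm (g ns - g ms) \<le> 2 * lam * real r powr (1 / p)"
    using close by (simp add: dist_norm)
  have g: "g zs = (\<Sum>c\<in>set zs. y c)" if "zs \<in> incr_tuples r UNIV" for zs
    using sum_nth_distinct[OF incr_tuplesD(1)[OF that]] incr_tuplesD(2)[OF that] by (simp add: g_def)
  define cs where "cs = sorted_list_of_set (set ns \<union> set ms)"
  define s where "s = map (\<lambda>c. c \<in> set ns) cs"
  have card: "card (set ns \<union> set ms) = 2 * r"
    using disj incr_tuplesD(3)[OF ns] incr_tuplesD(3)[OF ms] by (simp add: card_Un_disjoint)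
  show ?thesis
  proof
    show "length s = 2 * r" unfolding s_def cs_def using card by simp
    show "length (filter id s) = r"
      using signed_sum_membership_pattern(2)[OF _ _ disj] incr_tuplesD(3)[OF ns]
      unfolding s_def cs_def by simp
    show "cs \<in> incr_tuples (2 * r) UNIV"
      unfolding cs_def using card by (intro sorted_list_of_set_in_incr_tuples) auto
    show "norm (signed_sum s y ((!) cs)) \<le> 2 * lam * real r powr (1 / p)"
      using signed_sum_membership_pattern(1)[OF _ _ disj, of y] small g[OF ns] g[OF ms]
      unfolding s_def cs_def by simp
  qed
qed

lemma HC_with_constant_homogeneous_pattern:
  fixes x :: "nat \<Rightarrow> 'a::real_normed_vector"
  assumes hc: "HC_with_constant p lam (UNIV :: 'a set)" and lam: "0 \<le> lam"
    and x: "\<And>n. norm (x n) \<le> 1" and r: "1 \<le> r"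
  obtains Y s where "infinite Y" "length s = 2 * r" "length (filter id s) = r"
    "\<forall>cs\<in>incr_tuples (2 * r) Y. norm (signed_sum s x ((!) cs)) \<le> 2 * lam * real r powr (1 / p)"
proof -
  define Q where "Q s cs \<longleftrightarrow> norm (signed_sum s x ((!) cs)) \<le> 2 * lam * real r powr (1 / p)"
    for s :: "bool list" and cs
  have fin: "finite {s :: bool list. length s = 2 * r}"
    using finite_lists_length_eq[of "UNIV :: bool set" "2 * r"] by simp
  obtain Y where "Y \<subseteq> UNIV" and Y: "infinite Y" "\<forall>s\<in>{s. length s = 2 * r}. homogeneous (2 * r) Y (Q s)"
    by (rule Ramsey_incr_tuples_finite_family[OF fin infinite_UNIV_nat])
  define e where "e = enumerate Y"
  have e: "strict_mono e" "range e \<subseteq> Y"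
    using Y(1) by (auto simp: e_def strict_mono_def enumerate_mono enumerate_in_set)
  have "\<And>n. norm ((x \<circ> e) n) \<le> 1" using x by simp
  then obtain s cs where s: "length s = 2 * r" "length (filter id s) = r"
    and cs: "cs \<in> incr_tuples (2 * r) UNIV"
    and small: "norm (signed_sum s (x \<circ> e) ((!) cs)) \<le> 2 * lam * real r powr (1 / p)"
    using HC_with_constant_small_signed_sum[OF hc lam _ r] by blast
  have "signed_sum s (x \<circ> e) ((!) cs) = signed_sum s x ((!) (map e cs))"
    using s(1) incr_tuplesD(2)[OF cs] by (simp add: signed_sum_def)
  then have "Q s (map e cs)" using small by (simp add: Q_def)
  moreover have "map e cs \<in> incr_tuples (2 * r) Y" using map_in_incr_tuples[OF e cs] .
  moreover have "homogeneous (2 * r) Y (Q s)" using Y(2) s(1) by simp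
  ultimately have "\<forall>cs\<in>incr_tuples (2 * r) Y. Q s cs" unfolding homogeneous_def by blast
  then show ?thesis using Y(1) s by (intro that) (auto simp: Q_def)
qed

lemma HC_with_constant_even_alternating_sums:
  fixes x :: "nat \<Rightarrow> 'a::real_normed_vector"
  assumes hc: "HC_with_constant p lam (UNIV :: 'a set)" and lam: "0 \<le> lam"
    and x: "\<And>n. norm (x n) \<le> 1" and r: "1 \<le> r"
  obtains M where "infinite M"
    "\<forall>c\<in>incr_tuples (2 * r) M. norm (\<Sum>l<2 * r. (-1)^l *\<^sub>R x (c!l)) \<le> 4 * lam * real r powr (1 / p)"
proof -
  obtain Y s where Y: "infinite Y" and s: "length s = 2 * r" "length (filter id s) = r"
    and hom: "\<forall>cs\<in>incr_tuples (2 * r) Y. norm (signed_sum s x ((!) cs)) \<le> 2 * lam * real r powr (1 / p)"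
    by (rule HC_with_constant_homogeneous_pattern[OF hc lam x r])
  define e where "e = enumerate Y"
  have e: "strict_mono e" "range e \<subseteq> Y"
    using Y by (auto simp: e_def strict_mono_def enumerate_mono enumerate_in_set)
  \<comment> \<open>the spacing leaves room for the minus signs of the interleaved tuples\<close>
  define \<phi> where "\<phi> k = e ((2 * r + 1) * (k + 1))" for k
  have \<phi>: "strict_mono \<phi>"
  proof (rule strict_monoI)
    fix k k' :: nat assume "k < k'"
    then have "(2 * r + 1) * (k + 1) < (2 * r + 1) * (k' + 1)" by (intro mult_strict_left_mono) auto
    then show "\<phi> k < \<phi> k'" using e(1) by (simp add: \<phi>_def strict_mono_less)
  qed
  have hom_u: "norm (signed_sum s (x \<circ> e) u) \<le> 2 * lam * real r powr (1 / p)"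
    if "strict_mono_on {..<length s} u" for u
  proof -
    have "map e (map u [0..<2 * r]) \<in> incr_tuples (2 * r) Y"
      using map_in_incr_tuples[OF e map_upt_in_incr_tuples] that s(1) by simp
    then have "norm (signed_sum s x ((!) (map e (map u [0..<2 * r])))) \<le> 2 * lam * real r powr (1 / p)"
      using hom by blast
    moreover have "signed_sum s x ((!) (map e (map u [0..<2 * r]))) = signed_sum s (x \<circ> e) u"
      using s(1) by (simp add: signed_sum_def)
    ultimately show ?thesis by simp
  qed
  have bound: "norm (\<Sum>l<2 * r. (-1)^l *\<^sub>R x (c!l)) \<le> 4 * lam * real r powr (1 / p)"
    if c: "c \<in> incr_tuples (2 * r) (range \<phi>)" for c
  proof -
    obtain kk where kk: "strict_mono kk" "\<And>l. l < 2 * r \<Longrightarrow> c!l = \<phi> (kk l)"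
      using incr_tuples_range_strict_mono[OF \<phi> c] by blast
    define a where "a l = (2 * r + 1) * (kk l + 1)" for l
    have gap: "a l + length s < a l'" if "l < l'" for l l'
    proof -
      have "kk l + 1 \<le> kk l'" using kk(1) that by (simp add: strict_mono_less Suc_le_eq)
      then have "(2 * r + 1) * (kk l + 2) \<le> (2 * r + 1) * (kk l' + 1)" by (intro mult_le_mono2) simp
      then show ?thesis using s(1) by (simp add: a_def algebra_simps)
    qed
    have "norm (\<Sum>l<2 * r. (-1)^l *\<^sub>R (x \<circ> e) (a l)) \<le> 2 * (2 * lam * real r powr (1 / p))"
      using alternating_sum_le_from_pattern[OF hom_u gap] s by (simp add: a_def)
    moreover have "(\<Sum>l<2 * r. (-1)^l *\<^sub>R (x \<circ> e) (a l)) = (\<Sum>l<2 * r. (-1)^l *\<^sub>R x (c!l))"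
      using kk(2) by (simp add: a_def \<phi>_def)
    ultimately show ?thesis by simp
  qed
  have "infinite (range \<phi>)" using \<phi> by (simp add: range_inj_infinite strict_mono_imp_inj_on)
  then show ?thesis by (rule that) (use bound in blast)
qed

lemma HC_with_constant_alternating_sums:
  fixes x :: "nat \<Rightarrow> 'a::real_normed_vector"
  assumes hc: "HC_with_constant p lam (UNIV :: 'a set)" and lam: "0 \<le> lam" and p: "0 < p"
    and x: "\<And>n. norm (x n) \<le> 1"
  shows "\<exists>M. infinite M \<and> (\<forall>ns\<in>incr_tuples K M.
           norm (\<Sum>j<K. (-1) ^ (j + 1) *\<^sub>R x (ns!j)) \<le> (4 * lam + 1) * real K powr (1 / p))"
proof (cases "K = 0")
  case False
  define r where "r = (K + 1) div 2"
  have r: "1 \<le> r" "r \<le> K" "K \<le> 2 * r" "2 * r \<le> K + 1" using False by (auto simp: r_def)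
  obtain M where M: "infinite M"
    and bound: "\<forall>c\<in>incr_tuples (2 * r) M. norm (\<Sum>l<2 * r. (-1)^l *\<^sub>R x (c!l)) \<le> 4 * lam * real r powr (1 / p)"
    by (rule HC_with_constant_even_alternating_sums[OF hc lam x r(1)])
  have "norm (\<Sum>j<K. (-1) ^ (j + 1) *\<^sub>R x (c!j)) \<le> (4 * lam + 1) * real K powr (1 / p)"
    if c: "c \<in> incr_tuples K M" for c
  proof -
    have "K + (2 * r - K) = 2 * r" using r(3) by simp
    then obtain c' where c': "c' \<in> incr_tuples (2 * r) M" "take K c' = c"
      using incr_tuples_extend[OF M c, of "2 * r - K"] by auto
    have even: "norm (\<Sum>l<2 * r. (-1)^l *\<^sub>R x (c'!l)) \<le> 4 * lam * real r powr (1 / p)"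
      using bound c'(1) by blast
    have "(\<Sum>j<K. (-1) ^ (j + 1) *\<^sub>R x (c!j)) = - (\<Sum>l<K. (-1)^l *\<^sub>R x (c'!l))"
      using c'(2) by (auto simp: sum_negf[symmetric] intro: sum.cong)
    then have "norm (\<Sum>j<K. (-1) ^ (j + 1) *\<^sub>R x (c!j)) = norm (\<Sum>l<K. (-1)^l *\<^sub>R x (c'!l))"
      by simp
    also have "\<dots> \<le> 4 * lam * real r powr (1 / p) + 1"
    proof (cases "K = 2 * r")
      case True
      then show ?thesis using even by simp
    next
      case False
      then have "2 * r = Suc K" using r by simp
      then have drop_last: "(\<Sum>l<K. (-1)^l *\<^sub>R x (c'!l))
          = (\<Sum>l<2 * r. (-1)^l *\<^sub>R x (c'!l)) - (-1)^K *\<^sub>R x (c'!K)"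
        by simp
      have "norm ((-1::real)^K *\<^sub>R x (c'!K)) \<le> 1" using x by simp
      then show ?thesis unfolding drop_last
        using even norm_triangle_ineq4[of "\<Sum>l<2 * r. (-1)^l *\<^sub>R x (c'!l)" "(-1::real)^K *\<^sub>R x (c'!K)"]
        by linarith
    qed
    also have "\<dots> \<le> (4 * lam + 1) * real K powr (1 / p)"
    proof -
      have "real r powr (1 / p) \<le> real K powr (1 / p)" using r p by (intro powr_mono2) auto
      moreover have "1 \<le> real K powr (1 / p)" using r p by (intro ge_one_powr_ge_zero) auto
      moreover have "4 * lam * real r powr (1 / p) \<le> 4 * lam * real K powr (1 / p)"
        using calculation(1) lam by (intro mult_left_mono) auto
      ultimately show ?thesis by (simp add: algebra_simps)
    qed
    finally show ?thesis .
  qed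
  then show ?thesis using M by blast
qed (intro exI[of _ UNIV]; simp)

theorem mainTheorem11:
  fixes p :: real
  assumes "1 < p"
    and "HC p (UNIV :: 'a::banach set)"
  shows "alternating_BS p TYPE('a)"
proof -
  obtain lam where lam: "0 < lam" "HC_with_constant p lam (UNIV :: 'a set)"
    using assms(2) HC_iff_HC_with_constant by blast
  have "\<exists>M. infinite M \<and> (\<forall>ns\<in>incr_tuples k M.
          norm (\<Sum>j<k. (-1) ^ (j + 1) *\<^sub>R x (ns!j)) \<le> (4 * lam + 1) * real k powr (1 / p))"
    if "\<forall>n. norm (x n) \<le> 1" for x :: "nat \<Rightarrow> 'a" and k
    by (rule HC_with_constant_alternating_sums[OF lam(2)]) (use lam(1) assms(1) that in auto)
  then show ?thesis unfolding alternating_BS_def using lam(1) by (intro exI[of _ "4 * lam + 1"]) auto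
qed

end
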